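(* Let $d\ge2$, $U_0$ a non-empty bounded Borel subset of $\mathbb{R}^d$, $U_1=\mathbb{R}^d\setminus U_0$. For $x\in\mathbb{R}^d$ and integers $\ell'>\ell$ set $\beta'=\frac{1}{|B(x,2^{-\ell})|}\int_{B(x,2^{-\ell})}\widehat\sigma_{\ell'}(y)\,dy$. Then for every $0\le\delta\le\beta'\wedge(1-\beta')$ at least one of the following holds: (i) $\mu_{x,\ell}(\{\widehat\sigma_{\ell'}>\beta'+\delta\})\ge\frac\delta2$ and $\mu_{x,\ell}(\{\widehat\sigma_{\ell'}<\beta'-\delta\})\ge\frac\delta2$; (ii) $\mu_{x,\ell}(\{\beta'-\delta\le\widehat\sigma_{\ell'}\le\beta'+\delta\})\ge\frac14-\frac\delta2$.
   Context: $B(x,r)$ is the closed sup-norm ball, $|\cdot|$ Lebesgue measure, $\widehat\sigma_\ell(x)=|B(x,2^{-\ell})\cap U_1|/|B(x,2^{-\ell})|$, and $\mu_{x,\ell}(dy)=|B(x,2^{-\ell})|^{-1}1_{B(x,2^{-\ell})}(y)\,dy$ is normalized Lebesgue measure on $B(x,2^{-\ell})$. *)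

theory Defs
  imports "HOL-Analysis.Analysis" "HOL-Probability.Probability"
begin

definition sup_ball :: "real^'n \<Rightarrow> real \<Rightarrow> (real^'n) set" where
  "sup_ball x r = {y. \<forall>i. \<bar>y $ i - x $ i\<bar> \<le> r}"

definition sigma_hat :: "(real^'n) set \<Rightarrow> int \<Rightarrow> real^'n \<Rightarrow> real" where
  "sigma_hat U0 l x =
     measure lebesgue (sup_ball x (2 powr (- real_of_int l)) \<inter> (UNIV - U0))
     / measure lebesgue (sup_ball x (2 powr (- real_of_int l)))"

definition mu_ball :: "real^'n \<Rightarrow> int \<Rightarrow> (real^'n) measure" where
  "mu_ball x l = uniform_measure lebesgue (sup_ball x (2 powr (- real_of_int l)))"

end

theory Submission
  imports Defs
begin

text \<open>Under the normalized measure on B(x, 2^-l) the function \<sigma>' = sigma_hat U0 l' takes values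
  in [0,1] and has mean \<beta>'. Split the ball into the upper tail (mass a), the middle band (mass m)
  and the lower tail (mass c), so a + m + c = 1. Bounding the mean from above and below by the
  band values gives c\<delta> \<le> a(1 - \<beta>') + m\<delta> and a\<delta> \<le> c\<beta>' + m\<delta>. If a < \<delta>/2 the first forces
  c \<le> (1 - \<beta>')/2 + m, if c < \<delta>/2 the second forces a \<le> \<beta>'/2 + m, and in either case
  a + m + c = 1 yields m \<ge> 1/4 - \<delta>/2. Only the range and the mean of \<sigma>' matter.\<close>

lemma sup_ball_eq_cbox: "sup_ball (x::real^'n) r = cbox (\<chi> i. x$i - r) (\<chi> i. x$i + r)"
  unfolding sup_ball_def by (auto simp: mem_box_cart abs_diff_le_iff)

lemma sets_sup_ball [measurable]: "sup_ball (x::real^'n) r \<in> sets lborel"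
  by (simp add: sup_ball_eq_cbox)

lemma emeasure_sup_ball:
  assumes "0 \<le> r"
  shows "emeasure lebesgue (sup_ball (x::real^'n) r) = ennreal ((2 * r) ^ CARD('n))"
proof -
  have ne: "cbox (\<chi> i. x$i - r) (\<chi> i. x$i + r) \<noteq> {}"
    using assms by (auto simp: interval_ne_empty_cart)
  have "measure lebesgue (sup_ball x r) = (\<Prod>i\<in>UNIV. (x$i + r) - (x$i - r))"
    using content_cbox_cart[OF ne] by (simp add: sup_ball_eq_cbox)
  also have "\<dots> = (2 * r) ^ CARD('n)" by simp
  finally show ?thesis
    by (simp add: sup_ball_eq_cbox emeasure_lborel_cbox_eq emeasure_eq_ennreal_measure)
qed

lemma integral_uniform_measure:
  fixes f :: "'a \<Rightarrow> real"
  assumes "emeasure M S \<noteq> 0" "emeasure M S \<noteq> \<infinity>" "f \<in> borel_measurable M"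
  shows "integral\<^sup>L (uniform_measure M S) f = (LINT x:S|M. f x) / measure M S"
proof -
  have S: "S \<in> sets M" using assms(1) by (rule emeasure_neq_0_sets)
  have pos: "measure M S > 0"
    using assms(1,2) by (simp add: emeasure_eq_ennreal_measure less_le)
  have "uniform_measure M S = density M (\<lambda>x. indicator S x / measure M S)"
    unfolding uniform_measure_def using S pos assms(2)
    by (intro density_cong)
       (auto simp: emeasure_eq_ennreal_measure indicator_def divide_ennreal[symmetric])
  then show ?thesis
    using S assms(3)
    by (simp add: integral_density set_lebesgue_integral_def)
qed

lemma tail_masses_dichotomy:
  fixes a m c \<beta> \<delta> :: real
  assumes total: "a + m + c = 1" and nonneg: "0 \<le> a" "0 \<le> m" "0 \<le> c"
    and \<delta>: "0 \<le> \<delta>" "\<delta> \<le> \<beta>" "\<delta> \<le> 1 - \<beta>"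
    and mean_le: "\<beta> \<le> a + (\<beta> + \<delta>) * m + (\<beta> - \<delta>) * c"
    and mean_ge: "(\<beta> + \<delta>) * a + (\<beta> - \<delta>) * m \<le> \<beta>"
  shows "(\<delta> / 2 \<le> a \<and> \<delta> / 2 \<le> c) \<or> 1 / 4 - \<delta> / 2 \<le> m"
proof (rule ccontr)
  assume "\<not> ?thesis"
  then have m: "m < 1 / 4 - \<delta> / 2" and tail: "a < \<delta> / 2 \<or> c < \<delta> / 2" by auto
  then have "0 < \<delta>" using nonneg by linarith
  from tail show False
  proof
    assume a: "a < \<delta> / 2"
    have "\<beta> * (a + m + c) \<le> a + (\<beta> + \<delta>) * m + (\<beta> - \<delta>) * c"
      using mean_le total by simp
    then have "c * \<delta> \<le> a * (1 - \<beta>) + m * \<delta>"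
      by (simp add: algebra_simps)
    also have "\<dots> \<le> (\<delta> / 2) * (1 - \<beta>) + m * \<delta>"
      using a \<delta> by (intro add_right_mono mult_right_mono) auto
    finally have "c * \<delta> \<le> ((1 - \<beta>) / 2 + m) * \<delta>"
      by (simp add: algebra_simps)
    then have "c \<le> (1 - \<beta>) / 2 + m"
      using \<open>0 < \<delta>\<close> by simp
    then show False using total m a \<delta> by argo
  next
    assume c: "c < \<delta> / 2"
    have "(\<beta> + \<delta>) * a + (\<beta> - \<delta>) * m \<le> \<beta> * (a + m + c)"
      using mean_ge total by simp
    then have "a * \<delta> \<le> \<beta> * c + m * \<delta>"
      by (simp add: algebra_simps)
    also have "\<dots> \<le> \<beta> * (\<delta> / 2) + m * \<delta>"
      using c \<delta> by (intro add_right_mono mult_left_mono) auto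
    finally have "a * \<delta> \<le> (\<beta> / 2 + m) * \<delta>"
      by (simp add: algebra_simps)
    then have "a \<le> \<beta> / 2 + m"
      using \<open>0 < \<delta>\<close> by simp
    then show False using total m c \<delta> by argo
  qed
qed

lemma (in prob_space) two_sided_tails_or_concentration:
  fixes f :: "'a \<Rightarrow> real"
  assumes f [measurable]: "f \<in> borel_measurable M"
    and unit_range: "\<And>x. x \<in> space M \<Longrightarrow> 0 \<le> f x \<and> f x \<le> 1"
    and \<delta>: "0 \<le> \<delta>" "\<delta> \<le> min (expectation f) (1 - expectation f)"
  shows "(\<delta> / 2 \<le> prob {x \<in> space M. expectation f + \<delta> < f x} \<and>
          \<delta> / 2 \<le> prob {x \<in> space M. f x < expectation f - \<delta>})
       \<or> 1 / 4 - \<delta> / 2 \<le> prob {x \<in> space M. expectation f - \<delta> \<le> f x \<and> f x \<le> expectation f + \<delta>}"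
proof -
  define \<beta> where "\<beta> = expectation f"
  define A where "A = {x \<in> space M. \<beta> + \<delta> < f x}"
  define B where "B = {x \<in> space M. \<beta> - \<delta> \<le> f x \<and> f x \<le> \<beta> + \<delta>}"
  define C where "C = {x \<in> space M. f x < \<beta> - \<delta>}"
  have [measurable]: "A \<in> events" "B \<in> events" "C \<in> events"
    unfolding A_def B_def C_def by measurable
  have [simp]: "integrable M (indicator S :: 'a \<Rightarrow> real)" if "S \<in> events" for S
    using that by (simp add: less_top[symmetric])
  have int_f: "integrable M f"
    using unit_range by (intro integrable_const_bound[where B = 1]) auto
  have total: "prob A + prob B + prob C = 1"
  proof -
    have "prob A + prob B + prob C = expectation (\<lambda>x. indicator A x + indicator B x + indicator C x)"
      by simp
    also have "\<dots> = expectation (\<lambda>_. 1)"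
      using \<delta>(1) by (intro Bochner_Integration.integral_cong) (auto simp: A_def B_def C_def indicator_def)
    finally show ?thesis by (simp add: prob_space)
  qed
  have mean_le: "\<beta> \<le> prob A + (\<beta> + \<delta>) * prob B + (\<beta> - \<delta>) * prob C"
  proof -
    have "expectation f \<le> expectation (\<lambda>x. indicator A x + (\<beta> + \<delta>) * indicator B x + (\<beta> - \<delta>) * indicator C x)"
      using unit_range by (intro integral_mono int_f) (simp, auto simp: A_def B_def C_def indicator_def)
    then show ?thesis by (simp add: \<beta>_def)
  qed
  have mean_ge: "(\<beta> + \<delta>) * prob A + (\<beta> - \<delta>) * prob B \<le> \<beta>"
  proof -
    have "expectation (\<lambda>x. (\<beta> + \<delta>) * indicator A x + (\<beta> - \<delta>) * indicator B x) \<le> expectation f"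
      using unit_range by (intro integral_mono int_f) (simp, auto simp: A_def B_def C_def indicator_def)
    then show ?thesis by (simp add: \<beta>_def)
  qed
  show ?thesis
    using tail_masses_dichotomy[OF total _ _ _ \<delta>(1) _ _ mean_le mean_ge] \<delta>(2)
    unfolding A_def B_def C_def \<beta>_def by auto
qed

lemma borel_measurable_measure_sup_ball_Int:
  assumes [measurable]: "V \<in> sets borel"
  shows "(\<lambda>y::real^'n. measure lebesgue (sup_ball y r \<inter> V)) \<in> borel_measurable borel"
proof -
  define Q where "Q = {p :: (real^'n) \<times> (real^'n). snd p \<in> V \<and> (\<forall>i. \<bar>snd p $ i - fst p $ i\<bar> \<le> r)}"
  have "closed {p :: (real^'n) \<times> (real^'n). \<forall>i. \<bar>snd p $ i - fst p $ i\<bar> \<le> r}"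
    by (intro closed_Collect_all closed_Collect_le continuous_intros)
  moreover have "snd \<in> borel_measurable (borel :: ((real^'n) \<times> (real^'n)) measure)"
    by (intro borel_measurable_continuous_onI continuous_intros)
  then have "snd -` V \<in> sets (borel :: ((real^'n) \<times> (real^'n)) measure)"
    using measurable_sets[of snd borel borel V] by simp
  moreover have "Q = snd -` V \<inter> {p. \<forall>i. \<bar>snd p $ i - fst p $ i\<bar> \<le> r}"
    unfolding Q_def by blast
  ultimately have "Q \<in> sets (borel :: ((real^'n) \<times> (real^'n)) measure)"
    by simp
  then have "Q \<in> sets (borel \<Otimes>\<^sub>M lborel)"
    by (simp add: borel_prod[symmetric] cong: sets_pair_measure_cong)
  then have "(\<lambda>y. enn2real (emeasure lborel (Pair y -` Q))) \<in> borel_measurable borel"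
    by (intro borel_measurable_enn2real lborel.measurable_emeasure_Pair)
  moreover have "Pair y -` Q = sup_ball y r \<inter> V" for y
    unfolding Q_def sup_ball_def by (auto simp: abs_minus_commute)
  ultimately show ?thesis
    by (simp add: measure_def)
qed

lemma borel_measurable_sigma_hat:
  "U0 \<in> sets borel \<Longrightarrow> sigma_hat U0 l \<in> borel_measurable borel"
  unfolding sigma_hat_def[abs_def]
  using borel_measurable_divide[OF borel_measurable_measure_sup_ball_Int[of "UNIV - U0"]
      borel_measurable_measure_sup_ball_Int[of UNIV]]
  by simp

lemma sigma_hat_bounds: "0 \<le> sigma_hat U0 l y \<and> sigma_hat U0 l y \<le> 1"
proof -
  let ?S = "sup_ball y (2 powr - real_of_int l)"
  have "measure lebesgue (?S \<inter> (UNIV - U0)) \<le> measure lebesgue ?S"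
  proof (cases "?S \<inter> (UNIV - U0) \<in> sets lebesgue")
    case True
    moreover have "emeasure lebesgue ?S < \<infinity>"
      by (simp add: emeasure_sup_ball)
    moreover have "?S \<in> sets lebesgue"
      by (simp add: sup_ball_eq_cbox)
    ultimately show ?thesis
      by (intro measure_mono_fmeasurable) (auto simp: fmeasurable_def)
  qed (simp add: measure_notin_sets)
  then show ?thesis
    unfolding sigma_hat_def by (auto simp: divide_le_eq_1 less_le)
qed

theorem lemma1p2:
  fixes U0 :: "(real^'n) set" and x :: "real^'n" and l l' :: int and \<delta> :: real
  assumes "CARD('n) \<ge> 2"
    and "U0 \<in> sets borel" and "bounded U0" and "U0 \<noteq> {}"
    and "l' > l"
  defines "\<beta> \<equiv> (1 / measure lebesgue (sup_ball x (2 powr (- real_of_int l))))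
            * (LINT y : sup_ball x (2 powr (- real_of_int l)) | lebesgue. sigma_hat U0 l' y)"
  assumes "0 \<le> \<delta>" and "\<delta> \<le> min \<beta> (1 - \<beta>)"
  shows "(measure (mu_ball x l) {y. sigma_hat U0 l' y > \<beta> + \<delta>} \<ge> \<delta> / 2 \<and>
          measure (mu_ball x l) {y. sigma_hat U0 l' y < \<beta> - \<delta>} \<ge> \<delta> / 2)
       \<or> measure (mu_ball x l) {y. \<beta> - \<delta> \<le> sigma_hat U0 l' y \<and> sigma_hat U0 l' y \<le> \<beta> + \<delta>}
           \<ge> 1 / 4 - \<delta> / 2"
proof -
  let ?B = "sup_ball x (2 powr (- real_of_int l))"
  have B: "emeasure lebesgue ?B \<noteq> 0" "emeasure lebesgue ?B \<noteq> \<infinity>"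
    by (simp_all add: emeasure_sup_ball)
  then interpret prob_space "mu_ball x l"
    unfolding mu_ball_def by (rule prob_space_uniform_measure)
  have f: "sigma_hat U0 l' \<in> borel_measurable (mu_ball x l)"
    using borel_measurable_sigma_hat[OF assms(2)]
    by (simp add: mu_ball_def measurable_completion cong: measurable_cong_sets)
  have "expectation (sigma_hat U0 l') = \<beta>"
    using f B by (simp add: integral_uniform_measure mu_ball_def \<beta>_def)
  moreover have "space (mu_ball x l) = UNIV"
    by (simp add: mu_ball_def)
  ultimately show ?thesis
    using two_sided_tails_or_concentration[OF f sigma_hat_bounds \<open>0 \<le> \<delta>\<close>] \<open>\<delta> \<le> min \<beta> (1 - \<beta>)\<close>
    by simp
qed

end
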